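(* For every integer $n\ge 4$, the ordered pair $(Q_{n+1},AC_n)$ is a duality pair; that is, for every digraph $G$, $G\to AC_n$ if and only if $Q_{n+1}\not\to G$.
   Context: A homomorphism $G\to H$ of digraphs is a vertex map sending arcs to arcs. An ordered pair of digraphs $(G,H)$ is a duality pair if for every digraph $L$: $G\not\to L$ if and only if $L\to H$. For $n\ge 3$, $Q_n$ is the oriented path $(q_0,\dots,q_{n-1})$ on $n$ distinct vertices, with exactly one arc between $q_i$ and $q_{i+1}$ for each $i$ and no other arcs, such that: the first two arcs are $q_0\to q_1$ and $q_1\to q_2$; the subpath $(q_1,\dots,q_{n-2})$ is alternating (consecutive arcs have opposite directions); and the last two arcs (between $q_{n-3},q_{n-2}$ and between $q_{n-2},q_{n-1}$) have the same direction. For $n\ge 3$, $AC_n$ is the oriented cycle with vertices $a_0,\dots,a_{n-1}$ obtained from the path $(a_0,\dots,a_n)$ in which the arc between $a_i$ and $a_{i+1}$ is $a_i\to a_{i+1}$ if $i$ is even and $a_{i+1}\to a_i$ if $i$ is odd, by identifying $a_n$ with $a_0$. *)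

theory Defs
  imports Main
begin

definition digraph :: "'a set \<Rightarrow> ('a \<times> 'a) set \<Rightarrow> bool" where
  "digraph V A \<longleftrightarrow> A \<subseteq> V \<times> V"

definition hom :: "('a \<Rightarrow> 'b) \<Rightarrow> 'a set \<Rightarrow> ('a \<times> 'a) set \<Rightarrow> 'b set \<Rightarrow> ('b \<times> 'b) set \<Rightarrow> bool" where
  "hom f V A W B \<longleftrightarrow> (\<forall>v\<in>V. f v \<in> W) \<and> (\<forall>(u,v)\<in>A. (f u, f v) \<in> B)"

definition hom_exists :: "'a set \<Rightarrow> ('a \<times> 'a) set \<Rightarrow> 'b set \<Rightarrow> ('b \<times> 'b) set \<Rightarrow> bool" where
  "hom_exists V A W B \<longleftrightarrow> (\<exists>f. hom f V A W B)"

text \<open>Q_n: vertices 0..n-1; the arc between i and i+1 is forward (i \<rightarrow> i+1) iff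
  Q_fwd n i. Arcs 0 and 1 forward, arcs 1..n-3 alternate, arc n-2 has the
  same direction as arc n-3.\<close>

definition Q_fwd :: "nat \<Rightarrow> nat \<Rightarrow> bool" where
  "Q_fwd n i = (let j = (if i + 2 = n then n - 3 else i) in j = 0 \<or> odd j)"

definition Q_verts :: "nat \<Rightarrow> nat set" where
  "Q_verts n = {0..<n}"

definition Q_arcs :: "nat \<Rightarrow> (nat \<times> nat) set" where
  "Q_arcs n = {(i, i + 1) | i. i + 1 < n \<and> Q_fwd n i}
            \<union> {(i + 1, i) | i. i + 1 < n \<and> \<not> Q_fwd n i}"

definition AC_verts :: "nat \<Rightarrow> nat set" where
  "AC_verts n = {0..<n}"

definition AC_arcs :: "nat \<Rightarrow> (nat \<times> nat) set" where
  "AC_arcs n = {(i, (i + 1) mod n) | i. i < n \<and> even i}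
             \<union> {((i + 1) mod n, i) | i. i < n \<and> odd i}"

end

theory Submission
  imports Defs
begin

text \<open>Call a vertex middle if it has both an in- and an out-neighbour. For even n, AC_n
  has no middle vertex while Q_{n+1} folds onto a directed path of length 2, so both sides
  of the duality say that G has no middle vertex. For odd n, Q_{n+1} maps to G iff G has a
  zigzag walk (directions alternating, starting backwards) of length n - 2 from a middle vertex
  to a middle vertex. Seen through zigzag walks, AC_n is a path of length n from the vertex 0
  used as a tail to the vertex 0 used as a head; a homomorphism G \<rightarrow> AC_n is obtained by
  placing each vertex at n minus its (capped) zigzag distance from the middle vertices, and
  this works exactly when there is no such short walk.\<close>

definition middle :: "('a \<times> 'a) set \<Rightarrow> 'a \<Rightarrow> bool" where
  "middle A v \<longleftrightarrow> (\<exists>u. (u, v) \<in> A) \<and> (\<exists>w. (v, w) \<in> A)"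

definition zigzag :: "('a \<times> 'a) set \<Rightarrow> (nat \<Rightarrow> 'a) \<Rightarrow> nat \<Rightarrow> bool" where
  "zigzag A g k \<longleftrightarrow> (\<forall>i<k. if even i then (g (Suc i), g i) \<in> A else (g i, g (Suc i)) \<in> A)"

lemma hom_middle: "hom f V A W B \<Longrightarrow> middle A v \<Longrightarrow> middle B (f v)"
  unfolding hom_def middle_def by blast

lemma hom_zigzag: "hom f V A W B \<Longrightarrow> zigzag A g k \<Longrightarrow> zigzag B (f \<circ> g) k"
  unfolding hom_def zigzag_def by (fastforce split: if_splits)

lemma zigzag_Suc:
  "zigzag A g (Suc k) \<longleftrightarrow>
     zigzag A g k \<and> (if even k then (g (Suc k), g k) \<in> A else (g k, g (Suc k)) \<in> A)"
  unfolding zigzag_def less_Suc_eq by blast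

lemma zigzag_in_verts:
  assumes "digraph V A" and "zigzag A g k" and "0 < k" and "i \<le> k"
  shows "g i \<in> V"
proof -
  have "\<exists>j<k. i = j \<or> i = Suc j"
  proof (cases "i < k")
    case False
    then show ?thesis using assms(3,4) by (intro exI[of _ "k - 1"]) auto
  qed blast
  then obtain j where "j < k" and "i = j \<or> i = Suc j" by blast
  moreover have "if even j then (g (Suc j), g j) \<in> A else (g j, g (Suc j)) \<in> A"
    using assms(2) \<open>j < k\<close> unfolding zigzag_def by blast
  ultimately show ?thesis using assms(1) unfolding digraph_def by (auto split: if_splits)
qed

definition zigzag_reach :: "('a \<times> 'a) set \<Rightarrow> nat \<Rightarrow> 'a \<Rightarrow> bool" where
  "zigzag_reach A k v \<longleftrightarrow> (\<exists>g. middle A (g 0) \<and> zigzag A g k \<and> g k = v)"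

lemma zigzag_reach_0: "zigzag_reach A 0 v \<longleftrightarrow> middle A v"
  unfolding zigzag_reach_def zigzag_def by auto

lemma zigzag_reach_Suc:
  assumes "zigzag_reach A k u" and step: "if even k then (v, u) \<in> A else (u, v) \<in> A"
  shows "zigzag_reach A (Suc k) v"
proof -
  obtain g where g: "middle A (g 0)" "zigzag A g k" "g k = u"
    using assms(1) unfolding zigzag_reach_def by blast
  let ?g = "g(Suc k := v)"
  have "zigzag A ?g k" using g(2) unfolding zigzag_def by simp
  then have "zigzag A ?g (Suc k)" using step g(3) unfolding zigzag_Suc by simp
  moreover have "middle A (?g 0)" "?g (Suc k) = v" using g(1) by simp_all
  ultimately show ?thesis unfolding zigzag_reach_def by blast
qed

lemma zigzag_reach_add2:
  assumes "zigzag_reach A k v" and "0 < k"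
  shows "zigzag_reach A (k + 2) v"
proof -
  obtain g where g: "middle A (g 0)" "zigzag A g k" "g k = v"
    using assms(1) unfolding zigzag_reach_def by blast
  have "k - 1 < k" "Suc (k - 1) = k" "even (k - 1) \<longleftrightarrow> odd k" using assms(2) by auto
  then have step: "if even k then (g (k - 1), v) \<in> A else (v, g (k - 1)) \<in> A"
    using g(2,3) unfolding zigzag_def by (metis (no_types))
  \<comment> \<open>Walk back along the last arc and forth again.\<close>
  have "zigzag_reach A (Suc k) (g (k - 1))" using zigzag_reach_Suc[OF assms(1) step] .
  moreover have "if even (Suc k) then (v, g (k - 1)) \<in> A else (g (k - 1), v) \<in> A"
    using step by (cases "even k") simp_all
  ultimately show ?thesis using zigzag_reach_Suc[of A "Suc k" "g (k - 1)" v] by simp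
qed

lemma zigzag_reach_add_even:
  assumes "zigzag_reach A k v" and "0 < k"
  shows "zigzag_reach A (k + 2 * j) v"
proof (induction j)
  case 0
  then show ?case using assms(1) by simp
next
  case (Suc j)
  then show ?case using zigzag_reach_add2[of A "k + 2 * j" v] assms(2) by simp
qed

text \<open>A potential on vertices together with a side: \<phi> v True values v as the tail and
  \<phi> v False as the head of an arc, i.e. at odd resp. even positions of a zigzag walk.\<close>

definition zigzag_lipschitz :: "('a \<times> 'a) set \<Rightarrow> ('a \<Rightarrow> bool \<Rightarrow> nat) \<Rightarrow> bool" where
  "zigzag_lipschitz A \<phi> \<longleftrightarrow>
     (\<forall>u v. (u, v) \<in> A \<longrightarrow> \<phi> u True \<le> \<phi> v False + 1 \<and> \<phi> v False \<le> \<phi> u True + 1)"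

lemma zigzag_lipschitz_bound:
  assumes "zigzag_lipschitz A \<phi>" and "zigzag A g k"
  shows "\<phi> (g 0) False \<le> \<phi> (g k) (odd k) + k"
  using assms(2)
proof (induction k)
  case 0
  then show ?case by simp
next
  case (Suc k)
  then have "\<phi> (g 0) False \<le> \<phi> (g k) (odd k) + k" by (simp add: zigzag_Suc)
  moreover have "\<phi> (g k) (odd k) \<le> \<phi> (g (Suc k)) (odd (Suc k)) + 1"
    using Suc.prems assms(1) unfolding zigzag_Suc zigzag_lipschitz_def by (auto split: if_splits)
  ultimately show ?case by simp
qed

lemma AC_arc_iff:
  "(a, b) \<in> AC_arcs n \<longleftrightarrow>
     (a < n \<and> even a \<and> b = (a + 1) mod n) \<or> (b < n \<and> odd b \<and> a = (b + 1) mod n)"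
  unfolding AC_arcs_def by blast

lemma AC_arc_even:
  assumes "even n" and "(a, b) \<in> AC_arcs n"
  shows "even a \<and> odd b"
  using assms(2) unfolding AC_arc_iff
proof (elim disjE conjE)
  assume "a < n" "even a" "b = (a + 1) mod n"
  moreover from this have "a + 1 < n" using \<open>even n\<close> by (metis Suc_eq_plus1 Suc_lessI even_Suc)
  ultimately show ?thesis by simp
next
  assume "b < n" "odd b" "a = (b + 1) mod n"
  then show ?thesis using \<open>even n\<close> by (cases "b + 1 = n") auto
qed

lemma AC_arc_odd:
  assumes "odd n" and "(a, b) \<in> AC_arcs n"
  shows "even a \<and> a < n \<and> b < n \<and> (a = n - 1 \<and> b = 0 \<or> b = a + 1 \<or> a = b + 1)"
  using assms(2) unfolding AC_arc_iff
proof (elim disjE conjE)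
  assume "a < n" "even a" "b = (a + 1) mod n"
  then show ?thesis by (cases "a + 1 = n") auto
next
  assume "b < n" "odd b" "a = (b + 1) mod n"
  moreover from this have "b + 1 < n" using \<open>odd n\<close> by (metis Suc_eq_plus1 Suc_lessI even_Suc)
  ultimately show ?thesis by simp
qed

lemma AC_no_middle:
  assumes "even n"
  shows "\<not> middle (AC_arcs n) v"
proof
  assume "middle (AC_arcs n) v"
  then obtain u w where "(u, v) \<in> AC_arcs n" "(v, w) \<in> AC_arcs n"
    unfolding middle_def by blast
  from AC_arc_even[OF assms this(1)] AC_arc_even[OF assms this(2)] show False by simp
qed

lemma AC_middle_eq_0:
  assumes "odd n" and "middle (AC_arcs n) v"
  shows "v = 0"
proof -
  obtain u w where "(u, v) \<in> AC_arcs n" "(v, w) \<in> AC_arcs n"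
    using assms(2) unfolding middle_def by blast
  from AC_arc_odd[OF assms(1) this(1)] AC_arc_odd[OF assms(1) this(2)] show ?thesis by auto
qed

text \<open>For odd n, the zigzag walks of AC_n live on the path 0, 1, ..., n - 1, 0 that starts
  with 0 as a tail and ends with 0 as a head; the potential is the position on that path.\<close>

lemma AC_zigzag_lipschitz:
  assumes "odd n"
  shows "zigzag_lipschitz (AC_arcs n) (\<lambda>v b. if v = 0 \<and> \<not> b then n else v)"
  unfolding zigzag_lipschitz_def
proof (intro allI impI)
  fix u v assume "(u, v) \<in> AC_arcs n"
  from AC_arc_odd[OF assms this]
  show "(if u = 0 \<and> \<not> True then n else u) \<le> (if v = 0 \<and> \<not> False then n else v) + 1 \<and>
    (if v = 0 \<and> \<not> False then n else v) \<le> (if u = 0 \<and> \<not> True then n else u) + 1"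
    by auto
qed

lemma AC_arc_diff:
  assumes "odd n" and "odd p" and "even q" and "0 < q" and "p \<le> n" and "q \<le> n - 1"
    and "p \<le> q + 1" and "q \<le> p + 1"
  shows "(n - p, n - q) \<in> AC_arcs n"
proof -
  have "p \<noteq> q" using assms(2,3) by auto
  then consider "q = p + 1" | "p = q + 1" using assms(7,8) by linarith
  then show ?thesis
  proof cases
    case 1
    then have "n - p = (n - q) + 1" "n - p < n" using odd_pos[OF assms(2)] assms(6) by linarith+
    moreover have "odd (n - q)" using assms(1,3,6) by simp
    ultimately show ?thesis unfolding AC_arc_iff by simp
  next
    case 2
    then have "n - q = (n - p) + 1" "n - q < n" using assms(4,5) by linarith+
    moreover have "even (n - p)" using assms(1,2,5) by simp
    ultimately show ?thesis unfolding AC_arc_iff by simp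
  qed
qed

lemma AC_hom_exists_even:
  assumes "even n" and "n \<ge> 2"
  shows "hom_exists V A (AC_verts n) (AC_arcs n) \<longleftrightarrow> \<not> (\<exists>v. middle A v)"
proof
  assume "hom_exists V A (AC_verts n) (AC_arcs n)"
  then obtain h where "hom h V A (AC_verts n) (AC_arcs n)" unfolding hom_exists_def by blast
  then show "\<not> (\<exists>v. middle A v)" using hom_middle AC_no_middle[OF assms(1)] by metis
next
  assume no_middle: "\<not> (\<exists>v. middle A v)"
  define f where "f v = (if \<exists>w. (v, w) \<in> A then 0 else 1 :: nat)" for v
  have "(f u, f v) \<in> AC_arcs n" if "(u, v) \<in> A" for u v
  proof -
    have "f u = 0" "f v = 1" using that no_middle unfolding f_def middle_def by auto
    moreover have "(0, 1) \<in> AC_arcs n" unfolding AC_arc_iff using assms(2) by simp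
    ultimately show ?thesis by simp
  qed
  moreover have "f v \<in> AC_verts n" for v using assms(2) by (simp add: f_def AC_verts_def)
  ultimately show "hom_exists V A (AC_verts n) (AC_arcs n)"
    unfolding hom_exists_def hom_def by blast
qed

lemma hom_Q_iff:
  "hom F (Q_verts N) (Q_arcs N) V A \<longleftrightarrow> (\<forall>i<N. F i \<in> V) \<and>
     (\<forall>i. Suc i < N \<longrightarrow> (if Q_fwd N i then (F i, F (Suc i)) \<in> A else (F (Suc i), F i) \<in> A))"
  unfolding hom_def Q_verts_def Q_arcs_def by fastforce

lemma Q_fwd_eq:
  assumes "n \<ge> 3"
  shows "Q_fwd (n + 1) i \<longleftrightarrow> (if i = n - 1 then odd n else i = 0 \<or> odd i)"
  using assms unfolding Q_fwd_def Let_def by auto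

lemma Q_hom_exists_even:
  assumes "even n" and "n \<ge> 3" and "digraph V A"
  shows "hom_exists (Q_verts (n + 1)) (Q_arcs (n + 1)) V A \<longleftrightarrow> (\<exists>v. middle A v)"
proof
  assume "hom_exists (Q_verts (n + 1)) (Q_arcs (n + 1)) V A"
  then obtain F where F: "hom F (Q_verts (n + 1)) (Q_arcs (n + 1)) V A"
    unfolding hom_exists_def by blast
  have "(F 0, F 1) \<in> A" "(F 1, F 2) \<in> A"
    using F assms(1,2) unfolding hom_Q_iff Q_fwd_eq[OF assms(2)]
    by (auto dest!: spec[of _ 0] spec[of _ 1] simp: numeral_2_eq_2)
  then show "\<exists>v. middle A v" unfolding middle_def by blast
next
  assume "\<exists>v. middle A v"
  then obtain a b c where ab: "(a, b) \<in> A" and bc: "(b, c) \<in> A" unfolding middle_def by blast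
  have "a \<in> V" "b \<in> V" "c \<in> V" using ab bc assms(3) unfolding digraph_def by auto
  define F where "F i = (if i = 0 \<or> i = n then a else if odd i then b else c)" for i
  \<comment> \<open>Q_{n+1} folds onto the directed path a \<rightarrow> b \<rightarrow> c.\<close>
  have "hom F (Q_verts (n + 1)) (Q_arcs (n + 1)) V A"
    unfolding hom_Q_iff Q_fwd_eq[OF assms(2)]
  proof (intro conjI allI impI)
    fix i assume "i < n + 1"
    show "F i \<in> V" using \<open>a \<in> V\<close> \<open>b \<in> V\<close> \<open>c \<in> V\<close> by (simp add: F_def)
  next
    fix i assume "Suc i < n + 1"
    then consider "i = n - 1" | "i < n - 1" by linarith
    then show "if if i = n - 1 then odd n else i = 0 \<or> odd i
      then (F i, F (Suc i)) \<in> A else (F (Suc i), F i) \<in> A"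
    proof cases
      case 1
      then show ?thesis using ab assms(1,2) by (auto simp: F_def)
    next
      case 2
      then show ?thesis using ab bc assms(1,2) by (auto simp: F_def)
    qed
  qed
  then show "hom_exists (Q_verts (n + 1)) (Q_arcs (n + 1)) V A"
    unfolding hom_exists_def by blast
qed

lemma zigzag_of_Q_hom:
  assumes "odd n" and "n \<ge> 3" and "hom F (Q_verts (n + 1)) (Q_arcs (n + 1)) V A"
  shows "middle A (F 1)" and "zigzag_reach A (n - 2) (F 1)"
proof -
  have arc: "if i = n - 1 then (F i, F (Suc i)) \<in> A
      else if i = 0 \<or> odd i then (F i, F (Suc i)) \<in> A else (F (Suc i), F i) \<in> A"
    if "i < n" for i
    using that assms(1,3) unfolding hom_Q_iff Q_fwd_eq[OF assms(2)] by (auto split: if_splits)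
  define g where "g i = F (n - 1 - i)" for i
  have "(1::nat) \<noteq> n - 1" using assms(2) by simp
  then have "(F 0, F 1) \<in> A" "(F 1, F 2) \<in> A"
    using arc[of 0] arc[of 1] assms(2) by (auto simp: numeral_2_eq_2)
  then show "middle A (F 1)" unfolding middle_def by blast
  have "odd (n - 2)" "n - 2 \<noteq> n - 1" "Suc (n - 2) = n - 1" "Suc (n - 1) = n"
    using assms(1,2) by auto
  then have "(F (n - 2), F (n - 1)) \<in> A" "(F (n - 1), F n) \<in> A"
    using arc[of "n - 2"] arc[of "n - 1"] assms(2) by auto
  then have "middle A (g 0)" unfolding middle_def g_def by auto
  moreover have "zigzag A g (n - 2)"
    unfolding zigzag_def
  proof (intro allI impI)
    fix i assume i: "i < n - 2"
    have "odd (n - 2 - i) \<longleftrightarrow> even i" "n - 2 - i \<noteq> n - 1" "n - 2 - i \<noteq> 0"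
      using i assms(1) by auto
    moreover have "Suc (n - 2 - i) = n - 1 - i" "n - 1 - Suc i = n - 2 - i" using i by auto
    ultimately show "if even i then (g (Suc i), g i) \<in> A else (g i, g (Suc i)) \<in> A"
      using arc[of "n - 2 - i"] i unfolding g_def by (auto split: if_splits)
  qed
  moreover have "g (n - 2) = F 1" using assms(2) by (simp add: g_def)
  ultimately show "zigzag_reach A (n - 2) (F 1)" unfolding zigzag_reach_def by blast
qed

lemma Q_hom_of_zigzag:
  assumes "odd n" and "n \<ge> 3" and "digraph V A"
    and "middle A v" and "zigzag_reach A (n - 2) v"
  shows "hom_exists (Q_verts (n + 1)) (Q_arcs (n + 1)) V A"
proof -
  obtain g where "middle A (g 0)" and g: "zigzag A g (n - 2)" "g (n - 2) = v"
    using assms(5) unfolding zigzag_reach_def by blast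
  then obtain a c where a: "(a, g (n - 2)) \<in> A" and c: "(g 0, c) \<in> A"
    using assms(4) unfolding middle_def by blast
  have g_arc: "if even i then (g (Suc i), g i) \<in> A else (g i, g (Suc i)) \<in> A" if "i < n - 2" for i
    using g(1) that unfolding zigzag_def by blast
  define F where "F j = (if j = 0 then a else if j = n then c else g (n - 1 - j))" for j
  have "hom F (Q_verts (n + 1)) (Q_arcs (n + 1)) V A"
    unfolding hom_Q_iff Q_fwd_eq[OF assms(2)]
  proof (intro conjI allI impI)
    fix j assume "j < n + 1"
    then show "F j \<in> V"
      using zigzag_in_verts[OF assms(3) g(1)] a c assms(2,3) unfolding F_def digraph_def by auto
  next
    fix j assume "Suc j < n + 1"
    then consider "j = 0" | "j = n - 1" | "0 < j" "j < n - 1" by linarith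
    then show "if if j = n - 1 then odd n else j = 0 \<or> odd j
      then (F j, F (Suc j)) \<in> A else (F (Suc j), F j) \<in> A"
    proof cases
      case 1
      then show ?thesis using a assms(2) by (simp add: F_def Suc_diff_Suc numeral_2_eq_2)
    next
      case 2
      then show ?thesis using c assms(1,2) by (simp add: F_def)
    next
      case 3
      let ?i = "n - 2 - j"
      have "?i < n - 2" "odd j \<longleftrightarrow> even ?i" "g ?i = F (Suc j)" "g (Suc ?i) = F j"
        using 3 assms(1) by (auto simp: F_def Suc_diff_Suc)
      then show ?thesis using g_arc[of ?i] 3 by (auto split: if_splits)
    qed
  qed
  then show ?thesis unfolding hom_exists_def by blast
qed

lemma Q_hom_exists_odd:
  assumes "odd n" and "n \<ge> 3" and "digraph V A"
  shows "hom_exists (Q_verts (n + 1)) (Q_arcs (n + 1)) V A \<longleftrightarrow>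
    (\<exists>v. middle A v \<and> zigzag_reach A (n - 2) v)"
  using zigzag_of_Q_hom[OF assms(1,2)] Q_hom_of_zigzag[OF assms] unfolding hom_exists_def by blast

text \<open>For odd n the cap is the largest number up to n of parity b, so that the level always
  has parity b.\<close>

definition zigzag_level :: "('a \<times> 'a) set \<Rightarrow> nat \<Rightarrow> 'a \<Rightarrow> bool \<Rightarrow> nat" where
  "zigzag_level A n v b = (LEAST k. zigzag_reach A k v \<and> odd k = b \<or> k = (if b then n else n - 1))"

lemma zigzag_level_le: "zigzag_level A n v b \<le> (if b then n else n - 1)"
  unfolding zigzag_level_def by (rule Least_le) simp

lemma zigzag_level_le_reach: "zigzag_reach A k v \<Longrightarrow> zigzag_level A n v (odd k) \<le> k"
  unfolding zigzag_level_def by (rule Least_le) simp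

lemma zigzag_level_cases:
  "zigzag_reach A (zigzag_level A n v b) v \<and> odd (zigzag_level A n v b) = b \<or>
   zigzag_level A n v b = (if b then n else n - 1)"
  unfolding zigzag_level_def by (rule LeastI[of _ "if b then n else n - 1"]) simp

lemma zigzag_level_parity: "odd n \<Longrightarrow> odd (zigzag_level A n v b) \<longleftrightarrow> b"
  using zigzag_level_cases[of A n v b] by (auto split: if_splits)

lemma zigzag_level_middle_False: "middle A v \<Longrightarrow> zigzag_level A n v False = 0"
  using zigzag_level_le_reach[of A 0 v n] zigzag_reach_0[of A v] by simp

lemma zigzag_level_eq_0_middle: "n \<ge> 2 \<Longrightarrow> zigzag_level A n v False = 0 \<Longrightarrow> middle A v"
  using zigzag_level_cases[of A n v False] zigzag_reach_0[of A v] by auto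

lemma zigzag_level_Suc:
  assumes "odd n" and "if b then (u, v) \<in> A else (v, u) \<in> A"
  shows "zigzag_level A n v (\<not> b) \<le> zigzag_level A n u b + 1"
  using zigzag_level_cases[of A n u b]
proof
  assume reach: "zigzag_reach A (zigzag_level A n u b) u \<and> odd (zigzag_level A n u b) = b"
  then have "zigzag_reach A (Suc (zigzag_level A n u b)) v"
    using zigzag_reach_Suc[of A "zigzag_level A n u b" u v] assms(2) by (auto split: if_splits)
  then show ?thesis using zigzag_level_le_reach reach by fastforce
next
  assume "zigzag_level A n u b = (if b then n else n - 1)"
  then show ?thesis using zigzag_level_le[of A n v "\<not> b"] assms(1) by (auto split: if_splits)
qed

lemma zigzag_level_lipschitz: "odd n \<Longrightarrow> zigzag_lipschitz A (zigzag_level A n)"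
  unfolding zigzag_lipschitz_def
  using zigzag_level_Suc[of n True _ _ A] zigzag_level_Suc[of n False _ _ A] by fastforce

lemma zigzag_level_middle_True:
  assumes "odd n" and "n \<ge> 3" and no_walk: "\<not> (\<exists>x. middle A x \<and> zigzag_reach A (n - 2) x)"
    and "middle A v"
  shows "zigzag_level A n v True = n"
proof (rule ccontr)
  let ?k = "zigzag_level A n v True"
  assume "?k \<noteq> n"
  then have reach: "zigzag_reach A ?k v" and "odd ?k"
    using zigzag_level_cases[of A n v True] by auto
  have "?k < n" using \<open>?k \<noteq> n\<close> zigzag_level_le[of A n v True] by simp
  moreover have "?k \<noteq> n - 1" using \<open>odd ?k\<close> assms(1,2) by auto
  ultimately have "?k \<le> n - 2" by linarith
  then have "even (n - 2 - ?k)" using \<open>odd ?k\<close> assms(1) by simp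
  then obtain j where j: "n - 2 - ?k = 2 * j" by blast
  have "zigzag_reach A (?k + 2 * j) v"
    using zigzag_reach_add_even[OF reach] odd_pos[OF \<open>odd ?k\<close>] by simp
  moreover have "?k + 2 * j = n - 2" using j \<open>?k \<le> n - 2\<close> by simp
  ultimately show False using no_walk \<open>middle A v\<close> by auto
qed

definition zigzag_place :: "('a \<times> 'a) set \<Rightarrow> nat \<Rightarrow> 'a \<Rightarrow> nat" where
  "zigzag_place A n v = n - zigzag_level A n v (\<exists>w. (v, w) \<in> A)"

lemma zigzag_place_less:
  assumes "odd n" and "n \<ge> 3"
  shows "zigzag_place A n v < n"
proof (cases "\<exists>w. (v, w) \<in> A")
  case True
  have "odd (zigzag_level A n v True)" using zigzag_level_parity[OF assms(1), of A v True] by simp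
  then show ?thesis using True assms(2) unfolding zigzag_place_def by (simp add: odd_pos)
next
  case False
  then have "\<not> middle A v" unfolding middle_def by blast
  then have "zigzag_level A n v False \<noteq> 0" using zigzag_level_eq_0_middle[of n A v] assms(2) by auto
  then show ?thesis using False assms(2) unfolding zigzag_place_def by simp
qed

lemma zigzag_place_arc:
  assumes "odd n" and "n \<ge> 3" and no_walk: "\<not> (\<exists>x. middle A x \<and> zigzag_reach A (n - 2) x)"
    and uv: "(u, v) \<in> A"
  shows "(zigzag_place A n u, zigzag_place A n v) \<in> AC_arcs n"
proof -
  let ?p = "zigzag_level A n u True" and ?q = "zigzag_level A n v False"
  have "\<exists>w. (u, w) \<in> A" using uv by blast
  then have pu: "zigzag_place A n u = n - ?p" unfolding zigzag_place_def by simp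
  have "odd ?p" "even ?q"
    using zigzag_level_parity[OF assms(1), of A u True]
      zigzag_level_parity[OF assms(1), of A v False] by simp_all
  have "?p \<le> n" "?q \<le> n - 1"
    using zigzag_level_le[of A n u True] zigzag_level_le[of A n v False] by simp_all
  have "?p \<le> ?q + 1" "?q \<le> ?p + 1"
    using zigzag_level_lipschitz[OF assms(1), of A] uv unfolding zigzag_lipschitz_def by simp_all
  show ?thesis
  proof (cases "\<exists>w. (v, w) \<in> A")
    case True
    then have "middle A v" using uv unfolding middle_def by blast
    then have "zigzag_place A n v = 0" "?q = 0"
      using zigzag_level_middle_True[OF assms(1,2) no_walk] zigzag_level_middle_False True
      unfolding zigzag_place_def by simp_all
    moreover have "?p = 1" using odd_pos[OF \<open>odd ?p\<close>] \<open>?p \<le> ?q + 1\<close> \<open>?q = 0\<close> by linarith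
    moreover have "(n - 1, 0) \<in> AC_arcs n" unfolding AC_arc_iff using assms(1,2) by simp
    ultimately show ?thesis using pu by simp
  next
    case False
    then have pv: "zigzag_place A n v = n - ?q" unfolding zigzag_place_def by simp
    have "0 < ?q" using zigzag_place_less[OF assms(1,2), of A v] pv by linarith
    then show ?thesis
      using AC_arc_diff[OF assms(1) \<open>odd ?p\<close> \<open>even ?q\<close>] \<open>?p \<le> n\<close> \<open>?q \<le> n - 1\<close>
        \<open>?p \<le> ?q + 1\<close> \<open>?q \<le> ?p + 1\<close>
      unfolding pu pv by simp
  qed
qed

lemma AC_hom_exists_odd:
  assumes "odd n" and "n \<ge> 3"
  shows "hom_exists V A (AC_verts n) (AC_arcs n) \<longleftrightarrow>
    \<not> (\<exists>v. middle A v \<and> zigzag_reach A (n - 2) v)"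
proof
  assume "hom_exists V A (AC_verts n) (AC_arcs n)"
  then obtain h where h: "hom h V A (AC_verts n) (AC_arcs n)" unfolding hom_exists_def by blast
  show "\<not> (\<exists>v. middle A v \<and> zigzag_reach A (n - 2) v)"
  proof
    assume "\<exists>v. middle A v \<and> zigzag_reach A (n - 2) v"
    then obtain g where g: "middle A (g 0)" "middle A (g (n - 2))" "zigzag A g (n - 2)"
      unfolding zigzag_reach_def by blast
    have "h (g 0) = 0" "h (g (n - 2)) = 0"
      using AC_middle_eq_0[OF assms(1) hom_middle[OF h g(1)]]
        AC_middle_eq_0[OF assms(1) hom_middle[OF h g(2)]] .
    moreover have "zigzag (AC_arcs n) (h \<circ> g) (n - 2)" using hom_zigzag[OF h g(3)] .
    moreover have "odd (n - 2)" using assms by simp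
    ultimately show False
      using zigzag_lipschitz_bound[OF AC_zigzag_lipschitz[OF assms(1)], of "h \<circ> g" "n - 2"] assms(2)
      by simp
  qed
next
  assume "\<not> (\<exists>v. middle A v \<and> zigzag_reach A (n - 2) v)"
  then have "hom (zigzag_place A n) V A (AC_verts n) (AC_arcs n)"
    using zigzag_place_arc[OF assms] zigzag_place_less[OF assms] unfolding hom_def AC_verts_def
    by auto
  then show "hom_exists V A (AC_verts n) (AC_arcs n)" unfolding hom_exists_def by blast
qed

theorem mainTheorem8:
  fixes n :: nat and V :: "'a set" and A :: "('a \<times> 'a) set"
  assumes "n \<ge> 4" and "finite V" and "digraph V A"
  shows "hom_exists V A (AC_verts n) (AC_arcs n)
           \<longleftrightarrow> \<not> hom_exists (Q_verts (n + 1)) (Q_arcs (n + 1)) V A"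
proof (cases "even n")
  case True
  then show ?thesis
    using AC_hom_exists_even[OF True] Q_hom_exists_even[OF True _ assms(3)] assms(1) by simp
next
  case False
  then show ?thesis
    using AC_hom_exists_odd[OF False] Q_hom_exists_odd[OF False _ assms(3)] assms(1) by simp
qed

end
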